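(* For every integer $k\ge4$ and every prime power $q\ge k^2$, $$\left(1+\frac{q}{q-1}\sum_{i=1}^{k-2}\frac{(q-1)^i}{(q-2)^{\underline{i}}}\right)^{-1}<\min_{0\le j\le k-2}\frac{q^{\underline{j+1}}}{q^{j+1}}\log_q\!\left(\frac{q-j}{k-j-1}\right).$$ That is, the upper bound $\left(1+\frac{q}{q-1}\sum_{i=1}^{k-2}\frac{(q-1)^i}{(q-2)^{\underline{i}}}\right)^{-1}$ on the asymptotic rate of linear $k$-hash codes in $\mathbb{F}_q^n$ is strictly smaller than the Körner–Marton upper bound $\min_{0\le j\le k-2}\frac{q^{\underline{j+1}}}{q^{j+1}}\log_q\frac{q-j}{k-j-1}$ on the asymptotic rate of general $q$-ary $k$-hash codes.
   Context: For positive integers $b\le a$, $a^{\underline{b}}=a(a-1)\cdots(a-b+1)$. A $q$-ary code is a $k$-hash code if for any $k$ distinct codewords there is a coordinate in which they are all pairwise distinct. *)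

theory Defs
  imports Complex_Main "HOL-Number_Theory.Prime_Powers"
begin

definition ffall :: "real \<Rightarrow> nat \<Rightarrow> real" where
  "ffall a b = (\<Prod>i<b. (a - real i))"

end

theory Submission
  imports Defs "HOL-Analysis.Infinite_Products"
begin

text \<open>
  Each summand of the linear-code bound is at least 1, so its denominator exceeds
  \<open>k - 1\<close> and the bound is below \<open>1/(k - 1)\<close>. On the other side, for
  \<open>q \<ge> k\<^sup>2\<close> and \<open>j \<le> k - 2\<close> the Weierstrass product inequality bounds the
  falling-factorial ratio \<open>ffall q (j + 1) / q ^ (j + 1)\<close> below by
  \<open>1 - j(j + 1)/(2q) \<ge> 2/(k - 1)\<close>, while \<open>(q - j)/(k - j - 1) \<ge> q/(k - 1) \<ge> \<surd>q\<close>
  makes the logarithm at least \<open>1/2\<close>; so every Koerner-Marton term is at least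
  \<open>1/(k - 1)\<close>.
\<close>

lemma ffall_pos:
  assumes "real n < a + 1"
  shows "0 < ffall a n"
  unfolding ffall_def using assms by (intro prod_pos) auto

lemma ffall_le_power:
  assumes "real n \<le> a + 1"
  shows "ffall a n \<le> a ^ n"
proof -
  have "ffall a n \<le> (\<Prod>i<n. a)"
    unfolding ffall_def using assms by (intro prod_mono) auto
  then show ?thesis by simp
qed

lemma ffall_div_power_eq_prod:
  assumes "a \<noteq> 0"
  shows "ffall a n / a ^ n = (\<Prod>i<n. 1 - real i / a)"
proof -
  have "ffall a n / a ^ n = (\<Prod>i<n. (a - real i) / a)"
    by (simp add: ffall_def prod_dividef)
  also have "\<dots> = (\<Prod>i<n. 1 - real i / a)"
    using assms by (intro prod.cong) (auto simp: field_simps)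
  finally show ?thesis .
qed

lemma ffall_div_power_ge:
  assumes "0 < a" and "real n \<le> a + 1"
  shows "1 - real n * (real n - 1) / (2 * a) \<le> ffall a n / a ^ n"
proof -
  have gauss: "2 * (\<Sum>i<n. real i) = real n * (real n - 1)"
    by (induction n) (simp_all add: algebra_simps)
  have "(\<Sum>i<n. real i / a) = 2 * (\<Sum>i<n. real i) / (2 * a)"
    by (simp add: sum_divide_distrib)
  then have sum_eq: "(\<Sum>i<n. real i / a) = real n * (real n - 1) / (2 * a)"
    by (simp only: gauss)
  have "1 - (\<Sum>i<n. real i / a) \<le> (\<Prod>i<n. 1 - real i / a)"
    using assms by (intro Weierstrass_prod_ineq) auto
  then show ?thesis
    using assms(1) by (simp add: sum_eq ffall_div_power_eq_prod)
qed

lemma summand_ge_one: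
  assumes "real i + 2 \<le> q"
  shows "1 \<le> (q - 1) ^ i / ffall (q - 2) i"
proof -
  have "ffall (q - 2) i \<le> (q - 2) ^ i"
    using assms by (intro ffall_le_power) auto
  also have "\<dots> \<le> (q - 1) ^ i"
    using assms by (intro power_mono) auto
  finally show ?thesis
    using ffall_pos[of i "q - 2"] assms by simp
qed

lemma linear_hash_bound_lt:
  fixes q :: real and k :: nat
  assumes "3 \<le> k" and "real k \<le> q"
  shows "1 / (1 + q / (q - 1) * (\<Sum>i=1..k-2. (q - 1) ^ i / ffall (q - 2) i)) < 1 / (real k - 1)"
proof -
  define S where "S = (\<Sum>i=1..k-2. (q - 1) ^ i / ffall (q - 2) i)"
  have "real (k - 2) = (\<Sum>i=1..k-2. 1)"
    by simp
  also have "\<dots> \<le> S"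
    unfolding S_def using assms by (intro sum_mono summand_ge_one) auto
  finally have S_ge: "real k - 2 \<le> S"
    using assms(1) by simp
  have "0 < q - 1" and "0 < S"
    using S_ge assms by auto
  then have "S < q / (q - 1) * S"
    by (simp add: field_simps)
  then show ?thesis
    unfolding S_def[symmetric] using S_ge assms(1) by (intro divide_strict_left_mono) auto
qed

lemma two_div_le_one_minus:
  fixes k :: real
  assumes "4 \<le> k"
  shows "2 / (k - 1) \<le> 1 - (k - 1) * (k - 2) / (2 * k\<^sup>2)"
proof -
  have "3 * 3 \<le> (k - 1)\<^sup>2"
    unfolding power2_eq_square using assms by (intro mult_mono) auto
  then have "0 \<le> k * ((k - 1)\<^sup>2 - 6)"
    using assms by simp
  then have "4 * k\<^sup>2 \<le> (k - 1) * (2 * k\<^sup>2 - (k - 1) * (k - 2))"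
    by (simp add: algebra_simps power2_eq_square)
  then show ?thesis
    using assms by (simp add: field_simps)
qed

lemma ffall_ratio_ge:
  fixes q k :: real
  assumes "4 \<le> k" and "k\<^sup>2 \<le> q" and "real j \<le> k - 2"
  shows "2 / (k - 1) \<le> ffall q (j + 1) / q ^ (j + 1)"
proof -
  have "k \<le> k\<^sup>2"
    using assms(1) by (simp add: power2_eq_square)
  then have q_pos: "0 < q" and "real j \<le> q"
    using assms by auto
  have "(real j + 1) * real j \<le> (k - 1) * (k - 2)"
    using assms(3) by (intro mult_mono) auto
  then have "(real j + 1) * real j / (2 * q) \<le> (k - 1) * (k - 2) / (2 * k\<^sup>2)"
    using assms by (intro frac_le) auto
  moreover have "1 - (real j + 1) * real j / (2 * q) \<le> ffall q (j + 1) / q ^ (j + 1)"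
    using ffall_div_power_ge[of q "j + 1"] q_pos \<open>real j \<le> q\<close> by (simp add: ac_simps)
  ultimately show ?thesis
    using two_div_le_one_minus[OF assms(1)] by linarith
qed

lemma log_ratio_ge_half:
  fixes q k :: real
  assumes "2 \<le> k" and "k\<^sup>2 \<le> q" and "real j \<le> k - 2"
  shows "1 / 2 \<le> log q ((q - real j) / (k - real j - 1))"
proof -
  define x where "x = (q - real j) / (k - real j - 1)"
  have "k \<le> k\<^sup>2"
    using assms(1) by (simp add: power2_eq_square)
  then have q_gt: "1 < q" and "k \<le> q"
    using assms by auto
  have "k * real j \<le> q * real j"
    using \<open>k \<le> q\<close> by (intro mult_right_mono) auto
  then have "q * (k - real j - 1) \<le> (q - real j) * (k - 1)"
    by (simp add: algebra_simps)
  then have "q / (k - 1) \<le> x"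
    unfolding x_def using assms by (simp add: field_simps)
  then have "(q / (k - 1))\<^sup>2 \<le> x\<^sup>2"
    using assms q_gt by (intro power_mono) auto
  moreover have "q \<le> (q / (k - 1))\<^sup>2"
  proof -
    have "(k - 1)\<^sup>2 \<le> q"
      using assms(1,2) by (simp add: power2_eq_square algebra_simps)
    then have "q * 1 \<le> q * (q / (k - 1)\<^sup>2)"
      using assms(1) q_gt by (intro mult_left_mono) auto
    then show ?thesis
      by (simp add: power_divide power2_eq_square)
  qed
  ultimately have "log q q \<le> log q (x\<^sup>2)"
    using q_gt by (intro log_mono) auto
  moreover have "0 < x"
    unfolding x_def using assms \<open>k \<le> q\<close> by simp
  ultimately show ?thesis
    using q_gt by (simp add: log_nat_power x_def)
qed

lemma korner_marton_term_ge:
  fixes q k :: real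
  assumes "4 \<le> k" and "k\<^sup>2 \<le> q" and "real j \<le> k - 2"
  shows "1 / (k - 1) \<le> ffall q (j + 1) / q ^ (j + 1) * log q ((q - real j) / (k - real j - 1))"
proof -
  have "1 / (k - 1) = 2 / (k - 1) * (1 / 2)"
    using assms by (simp add: field_simps)
  also have "\<dots> \<le> ffall q (j + 1) / q ^ (j + 1) * log q ((q - real j) / (k - real j - 1))"
  proof (rule mult_mono)
    show ratio_ge: "2 / (k - 1) \<le> ffall q (j + 1) / q ^ (j + 1)"
      using assms by (rule ffall_ratio_ge)
    show "0 \<le> ffall q (j + 1) / q ^ (j + 1)"
      using assms(1) by (intro order_trans[OF _ ratio_ge]) simp
    show "1 / 2 \<le> log q ((q - real j) / (k - real j - 1))"
      using assms by (intro log_ratio_ge_half) auto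
  qed simp
  finally show ?thesis .
qed

theorem theorem4:
  fixes k q :: nat
  assumes "k \<ge> 4" and "primepow q" and "q \<ge> k ^ 2"
  shows "1 / (1 + real q / (real q - 1) *
              (\<Sum>i=1..k-2. (real q - 1) ^ i / ffall (real q - 2) i))
         < Min ((\<lambda>j. ffall (real q) (j + 1) / real q ^ (j + 1)
                     * log (real q) ((real q - real j) / (real k - real j - 1))) ` {0..k-2})"
proof -
  have k_ge: "4 \<le> real k"
    using assms(1) by simp
  have q_ge: "(real k)\<^sup>2 \<le> real q"
    using assms(3) by (simp flip: of_nat_power)
  have "k \<le> k ^ 2"
    by (simp add: power2_eq_square)
  then have "real k \<le> real q"
    using assms(3) by simp
  then have "1 / (1 + real q / (real q - 1) *
              (\<Sum>i=1..k-2. (real q - 1) ^ i / ffall (real q - 2) i)) < 1 / (real k - 1)"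
    using assms(1) by (intro linear_hash_bound_lt) auto
  moreover have "1 / (real k - 1) \<le> ffall (real q) (j + 1) / real q ^ (j + 1)
                     * log (real q) ((real q - real j) / (real k - real j - 1))"
    if "j \<in> {0..k-2}" for j
    using that assms(1) by (intro korner_marton_term_ge k_ge q_ge) auto
  ultimately show ?thesis
    by (subst Min_gr_iff) force+
qed

end
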